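(* For every $n\geq 1$, the following hold in the $q$-shuffle algebra $(\mathbb V,\star)$ (polynomials taken with respect to $\star$): (i) $C_n$ is a homogeneous polynomial in $xC_0y, xC_1y,\ldots,xC_{n-1}y$ of total degree $n$, where $xC_{k-1}y$ is given degree $k$ for $1\le k\le n$; (ii) $xC_{n-1}y$ is a homogeneous polynomial in $C_1,C_2,\ldots,C_n$ of total degree $n$, where $C_k$ is given degree $k$ for $1\le k\le n$. Here $xC_{k}y$ denotes the free (concatenation) product.
   Context: $\mathbb F$ is a field of characteristic zero and $q\in\mathbb F$ is nonzero and not a root of unity; $[n]_q=(q^n-q^{-n})/(q-q^{-1})$. $\mathbb V$ is the free algebra on noncommuting letters $x,y$; a word is a product of letters (the empty word is $1$), and words form a basis. The $q$-shuffle product $\star$ on $\mathbb V$ is the bilinear product with $1\star v=v\star 1=v$ and, for nontrivial words $u=u_1\cdots u_r$, $v=v_1\cdots v_s$ (letters $u_i,v_j$), $u\star v=u_1\bigl((u_2\cdots u_r)\star v\bigr)+v_1\bigl(u\star(v_2\cdots v_s)\bigr)q^{(u_1,v_1)+(u_2,v_1)+\cdots+(u_r,v_1)}$, where juxtaposition is concatenation and $(x,x)=(y,y)=2$, $(x,y)=(y,x)=-2$. Set $\overline x=1$, $\overline y=-1$. A word $u_1\cdots u_n$ is Catalan if $\overline u_1+\cdots+\overline u_i\ge0$ for $1\le i\le n-1$ and $=0$ for $i=n$. For $n\in\mathbb N$, $C_n=\sum u_1u_2\cdots u_{2n}\,[1]_q[1+\overline u_1]_q[1+\overline u_1+\overline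 u_2]_q\cdots[1+\overline u_1+\cdots+\overline u_{2n}]_q$, summed over all Catalan words of length $2n$ (so $C_0=1$). *)

theory Defs
  imports Main
begin

text \<open>An element of the
free algebra V over the field 'a is represented by its coefficient function
on words (elements of V are the finitely supported such functions).\<close>

datatype letter = X | Y

type_synonym 'a vec = "letter list \<Rightarrow> 'a"

definition pairing :: "letter \<Rightarrow> letter \<Rightarrow> int" where
  "pairing a b = (if a = b then 2 else -2)"

definition word :: "letter list \<Rightarrow> 'a::field vec" where
  "word u = (\<lambda>w. if w = u then 1 else 0)"

fun qsh :: "'a::field \<Rightarrow> letter list \<Rightarrow> letter list \<Rightarrow> 'a vec" where
  "qsh q [] v = word v"
| "qsh q (a # u) [] = word (a # u)"
| "qsh q (a # u) (b # v) =
     (\<lambda>w. case w of [] \<Rightarrow> 0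
        | c # w' \<Rightarrow> (if c = a then qsh q u (b # v) w' else 0)
                 + (if c = b then qsh q (a # u) v w' * q powi (\<Sum>l\<leftarrow>a # u. pairing l b)
                    else 0))"

text \<open>Bilinear extension of the q-shuffle product to V (only words of length
at most that of w can contribute to the coefficient of w).\<close>
definition star :: "'a::field \<Rightarrow> 'a vec \<Rightarrow> 'a vec \<Rightarrow> 'a vec" where
  "star q f g = (\<lambda>w. \<Sum>a\<in>{a. set a \<subseteq> {X, Y} \<and> length a \<le> length w}.
                     \<Sum>b\<in>{b. set b \<subseteq> {X, Y} \<and> length b \<le> length w}.
                       f a * g b * qsh q a b w)"

definition cat :: "'a::field vec \<Rightarrow> 'a vec \<Rightarrow> 'a vec" where
  "cat f g = (\<lambda>w. \<Sum>i\<le>length w. f (take i w) * g (drop i w))"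

definition xwy :: "'a::field vec \<Rightarrow> 'a vec" where
  "xwy f = cat (word [X]) (cat f (word [Y]))"

definition bar :: "letter \<Rightarrow> int" where
  "bar l = (if l = X then 1 else -1)"

definition catalan :: "letter list \<Rightarrow> bool" where
  "catalan u \<longleftrightarrow> (\<forall>i. 1 \<le> i \<and> i \<le> length u - 1 \<longrightarrow> (\<Sum>l\<leftarrow>take i u. bar l) \<ge> 0)
                  \<and> (\<Sum>l\<leftarrow>u. bar l) = 0"

definition qint :: "'a::field \<Rightarrow> int \<Rightarrow> 'a" where
  "qint q k = (q powi k - q powi (-k)) / (q - inverse q)"

definition Cn :: "'a::field \<Rightarrow> nat \<Rightarrow> 'a vec" where
  "Cn q n = (\<lambda>w. if length w = 2 * n \<and> catalan w
                 then (\<Prod>i\<le>2 * n. qint q (1 + (\<Sum>l\<leftarrow>take i w. bar l)))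
                 else 0)"

definition star_mono :: "'a::field \<Rightarrow> (nat \<Rightarrow> 'a vec) \<Rightarrow> nat list \<Rightarrow> 'a vec" where
  "star_mono q g ks = foldr (star q) (map g ks) (word [])"

definition homog_poly :: "'a::field \<Rightarrow> (nat \<Rightarrow> 'a vec) \<Rightarrow> nat \<Rightarrow> 'a vec \<Rightarrow> bool" where
  "homog_poly q g n f \<longleftrightarrow>
     (\<exists>c :: nat list \<Rightarrow> 'a. \<forall>w. f w =
        (\<Sum>ks\<in>{ks. set ks \<subseteq> {1..n} \<and> sum_list ks = n}. c ks * star_mono q g ks w))"

end

theory Submission
  imports Defs
begin

text \<open>Read words as lattice paths, x a step up and y a step down. Let E be the sum of all
paths from height 0 back to 0 that stay nonnegative, each weighted by the product of
[1 + height]_q over the heights it reaches, and let G be the analogous sum of the paths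
that return to 0 only at their last step. The part of E of x-degree n is C_n, and the
part of G of x-degree k is x C_(k-1) y. Left derivatives of q-shuffle products obey a
twisted Leibniz rule; with it, induction on the length of words (for the analogous series
starting at an arbitrary height) shows
  (q - q^-1) N E = G' \<star> E - E \<star> G'',
where N multiplies each word by its number of x's, and G', G'' multiply the part of
x-degree k of G by q^2k and q^-2k. Taking parts of x-degree n gives
  (q - q^-1) n C_n = \<Sum> k=1..n. q^2k x C_(k-1) y \<star> C_(n-k) - q^-2k C_(n-k) \<star> x C_(k-1) y.
As q is not a root of unity, this expresses C_n through the x C_(k-1) y and the C_m with m < n;
isolating the term k = n, whose coefficient is q^2n - q^-2n \<noteq> 0, it also expresses
x C_(n-1) y through C_n and products of lower terms. Strong induction on n gives both
statements.\<close>

section \<open>The q-shuffle algebra\<close>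

lemma word_apply: "word u w = (if w = u then 1 else 0)"
  unfolding word_def by simp

definition words_le :: "nat \<Rightarrow> letter list set" where
  "words_le n = {a. length a \<le> n}"

lemma words_le_eq: "words_le n = {a. set a \<subseteq> {X, Y} \<and> length a \<le> n}"
  unfolding words_le_def using letter.exhaust by auto

lemma finite_words_le [simp]: "finite (words_le n)"
  unfolding words_le_eq by (rule finite_lists_length_le) auto

lemma star_eq_sum:
  "star q f g w = (\<Sum>a\<in>words_le (length w). \<Sum>b\<in>words_le (length w). f a * g b * qsh q a b w)"
  unfolding star_def words_le_eq ..

lemma qsh_nonzero_length: "qsh q a b w \<noteq> 0 \<Longrightarrow> length w = length a + length b"
proof (induction q a b arbitrary: w rule: qsh.induct)
  case (3 q a u b v)
  show ?case
  proof (cases w)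
    case (Cons d w')
    then have "qsh q u (b # v) w' \<noteq> 0 \<and> d = a \<or> qsh q (a # u) v w' \<noteq> 0 \<and> d = b"
      using "3.prems" by (auto split: if_splits)
    then show ?thesis using "3.IH" Cons by auto
  qed (use "3.prems" in simp)
qed (auto simp: word_apply split: if_splits)

lemma qsh_Nil_right [simp]: "qsh q a [] = word a"
  by (cases a) auto

lemma qsh_Cons:
  "qsh q a b (c # t) =
     (case a of [] \<Rightarrow> 0 | a0 # a' \<Rightarrow> if a0 = c then qsh q a' b t else 0)
   + (case b of [] \<Rightarrow> 0 | b0 # b' \<Rightarrow>
        if b0 = c then qsh q a b' t * q powi (\<Sum>l\<leftarrow>a. pairing l c) else 0)"
  by (cases a; cases b) (auto simp: word_apply)

lemma star_eq_sum_words_le: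
  assumes "length w \<le> m" "length w \<le> n"
  shows "star q f g w = (\<Sum>a\<in>words_le m. \<Sum>b\<in>words_le n. f a * g b * qsh q a b w)"
proof -
  have subset: "words_le (length w) \<subseteq> words_le k" if "length w \<le> k" for k
    using that by (auto simp: words_le_def)
  have zero: "f a * g b * qsh q a b w = 0"
    if "a \<notin> words_le (length w) \<or> b \<notin> words_le (length w)" for a b
    using qsh_nonzero_length[of q a b w] that by (auto simp: words_le_def)
  have "star q f g w = (\<Sum>a\<in>words_le (length w). \<Sum>b\<in>words_le n. f a * g b * qsh q a b w)"
    unfolding star_eq_sum
    by (intro sum.cong refl sum.mono_neutral_left finite_words_le subset assms(2))
       (blast intro: zero)
  also have "\<dots> = (\<Sum>a\<in>words_le m. \<Sum>b\<in>words_le n. f a * g b * qsh q a b w)"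
    by (intro sum.mono_neutral_left finite_words_le subset assms(1) ballI sum.neutral)
       (blast intro: zero)
  finally show ?thesis .
qed

lemma sum_words_le_Suc:
  "(\<Sum>a\<in>words_le (Suc n). F a) = F [] + (\<Sum>a\<in>words_le n. F (X # a)) + (\<Sum>a\<in>words_le n. F (Y # a))"
proof -
  have split: "words_le (Suc n) = insert [] (Cons X ` words_le n \<union> Cons Y ` words_le n)"
  proof (intro equalityI subsetI)
    fix a assume "a \<in> words_le (Suc n)"
    then show "a \<in> insert [] (Cons X ` words_le n \<union> Cons Y ` words_le n)"
      by (cases a) (auto simp: words_le_def intro: letter.exhaust)
  qed (auto simp: words_le_def)
  have "(\<Sum>a\<in>words_le (Suc n). F a)
      = F [] + ((\<Sum>a\<in>Cons X ` words_le n. F a) + (\<Sum>a\<in>Cons Y ` words_le n. F a))"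
    unfolding split by (subst sum.insert, simp, blast) (subst sum.union_disjoint; auto)
  then show ?thesis
    by (simp add: sum.reindex add.assoc)
qed

lemma sum_words_le_Suc_single:
  assumes "F [] = 0" "\<And>a d. d \<noteq> c \<Longrightarrow> F (d # a) = 0"
  shows "(\<Sum>a\<in>words_le (Suc n). F a) = (\<Sum>a\<in>words_le n. F (c # a))"
  unfolding sum_words_le_Suc using assms by (cases c) auto

definition lderiv :: "letter \<Rightarrow> 'a vec \<Rightarrow> 'a vec" where
  "lderiv c f = (\<lambda>t. f (c # t))"

definition twist :: "'a::field \<Rightarrow> letter \<Rightarrow> 'a vec \<Rightarrow> 'a vec" where
  "twist q c f = (\<lambda>a. q powi (\<Sum>l\<leftarrow>a. pairing l c) * f a)"

lemma star_Nil: "star q f g [] = f [] * g []"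
  by (simp add: star_eq_sum words_le_def word_apply)

lemma star_Cons:
  "star q f g (c # t) = star q (lderiv c f) g t + star q (twist q c f) (lderiv c g) t"
proof -
  let ?n = "length t"
  let ?L = "\<lambda>a b. case a of [] \<Rightarrow> 0 | a0 # a' \<Rightarrow> if a0 = c then qsh q a' b t else 0"
  let ?R = "\<lambda>a b. case b of [] \<Rightarrow> 0 | b0 # b' \<Rightarrow>
              if b0 = c then qsh q a b' t * q powi (\<Sum>l\<leftarrow>a. pairing l c) else 0"
  have "star q f g (c # t)
      = (\<Sum>a\<in>words_le (Suc ?n). \<Sum>b\<in>words_le (Suc ?n). f a * g b * ?L a b)
      + (\<Sum>a\<in>words_le (Suc ?n). \<Sum>b\<in>words_le (Suc ?n). f a * g b * ?R a b)"
    unfolding star_eq_sum by (simp add: qsh_Cons distrib_left sum.distrib)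
  also have "(\<Sum>a\<in>words_le (Suc ?n). \<Sum>b\<in>words_le (Suc ?n). f a * g b * ?L a b)
      = (\<Sum>a\<in>words_le ?n. \<Sum>b\<in>words_le (Suc ?n). f (c # a) * g b * qsh q a b t)"
    by (subst sum_words_le_Suc_single[where c = c]) auto
  also have "\<dots> = star q (lderiv c f) g t"
    by (subst star_eq_sum_words_le[of t ?n "Suc ?n"]) (auto simp: lderiv_def)
  also have "(\<Sum>a\<in>words_le (Suc ?n). \<Sum>b\<in>words_le (Suc ?n). f a * g b * ?R a b)
      = (\<Sum>a\<in>words_le (Suc ?n). \<Sum>b\<in>words_le ?n.
           f a * g (c # b) * (qsh q a b t * q powi (\<Sum>l\<leftarrow>a. pairing l c)))"
    by (rule sum.cong[OF refl], subst sum_words_le_Suc_single[where c = c]) auto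
  also have "\<dots> = star q (twist q c f) (lderiv c g) t"
    by (subst star_eq_sum_words_le[of t "Suc ?n" ?n])
       (auto simp: lderiv_def twist_def intro!: sum.cong simp: algebra_simps)
  finally show ?thesis .
qed

lemma lderiv_star:
  "lderiv c (star q f g) = (\<lambda>t. star q (lderiv c f) g t + star q (twist q c f) (lderiv c g) t)"
  by (simp add: lderiv_def star_Cons)

lemma star_sum_left: "star q (\<lambda>a. \<Sum>i\<in>I. F i a) g w = (\<Sum>i\<in>I. star q (F i) g w)"
  unfolding star_eq_sum by (simp add: sum_distrib_right sum.swap[where A = I])

lemma star_sum_right: "star q f (\<lambda>b. \<Sum>i\<in>I. F i b) w = (\<Sum>i\<in>I. star q f (F i) w)"
  unfolding star_eq_sum by (simp add: sum_distrib_right sum_distrib_left sum.swap[where A = I])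

lemma star_scale_left: "star q (\<lambda>a. k * f a) g w = k * star q f g w"
  unfolding star_eq_sum by (simp add: sum_distrib_left mult_ac)

lemma star_scale_right: "star q f (\<lambda>a. k * g a) w = k * star q f g w"
  unfolding star_eq_sum by (simp add: sum_distrib_left mult_ac)

lemma star_add_left: "star q (\<lambda>a. f a + f' a) g w = star q f g w + star q f' g w"
  unfolding star_eq_sum by (simp add: distrib_left distrib_right sum.distrib)

lemma star_add_right: "star q f (\<lambda>a. g a + g' a) w = star q f g w + star q f g' w"
  unfolding star_eq_sum by (simp add: distrib_left distrib_right sum.distrib)

lemma star_zero_left [simp]: "star q (\<lambda>a. 0) g w = 0"
  unfolding star_eq_sum by simp

lemma star_zero_right [simp]: "star q f (\<lambda>a. 0) w = 0"
  unfolding star_eq_sum by simp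

lemma lderiv_word_Nil: "lderiv c (word []) = (\<lambda>a. 0)"
  by (auto simp: lderiv_def word_apply)

lemma twist_word_Nil: "twist q c (word []) = word []"
  by (auto simp: twist_def word_apply)

lemma star_unit_left: "star q (word []) g w = g w"
  by (induction w arbitrary: g)
     (simp_all add: star_Nil star_Cons word_apply lderiv_word_Nil twist_word_Nil,
      simp add: lderiv_def)

lemma star_unit_right: "star q f (word []) w = f w"
  by (induction w arbitrary: f)
     (simp_all add: star_Nil star_Cons word_apply lderiv_word_Nil, simp add: lderiv_def)

lemma lderiv_twist:
  "q \<noteq> 0 \<Longrightarrow> lderiv c' (twist q c f) = (\<lambda>t. q powi pairing c' c * twist q c (lderiv c' f) t)"
  by (simp add: lderiv_def twist_def power_int_add fun_eq_iff)

lemma twist_commute: "twist q c (twist q c' f) = twist q c' (twist q c f)"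
  by (simp add: twist_def fun_eq_iff)

lemma twist_star:
  assumes "q \<noteq> 0"
  shows "twist q c (star q f g) = star q (twist q c f) (twist q c g)"
proof
  fix w show "twist q c (star q f g) w = star q (twist q c f) (twist q c g) w"
  proof (induction w arbitrary: f g)
    case Nil
    then show ?case by (simp add: star_Nil twist_def)
  next
    case (Cons c' t)
    have "twist q c (star q f g) (c' # t)
        = q powi pairing c' c * twist q c (lderiv c' (star q f g)) t"
      using lderiv_twist[OF assms, of c' c "star q f g"] by (simp add: lderiv_def fun_eq_iff)
    also have "twist q c (lderiv c' (star q f g)) t
        = star q (twist q c (lderiv c' f)) (twist q c g) t
        + star q (twist q c (twist q c' f)) (twist q c (lderiv c' g)) t"
      using Cons.IH by (simp add: lderiv_star twist_def distrib_left)
    finally show ?case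
      by (simp add: star_Cons lderiv_twist[OF assms] star_scale_left star_scale_right
          twist_commute distrib_left)
  qed
qed

lemma star_assoc:
  assumes "q \<noteq> 0"
  shows "star q (star q f g) h w = star q f (star q g h) w"
proof (induction w arbitrary: f g h)
  case Nil
  then show ?case by (simp add: star_Nil)
next
  case (Cons c t)
  have "star q (star q f g) h (c # t)
      = star q (star q (lderiv c f) g) h t + star q (star q (twist q c f) (lderiv c g)) h t
      + star q (star q (twist q c f) (twist q c g)) (lderiv c h) t"
    by (simp add: star_Cons lderiv_star star_add_left twist_star[OF assms])
  also have "\<dots> = star q (lderiv c f) (star q g h) t + star q (twist q c f) (star q (lderiv c g) h) t
      + star q (twist q c f) (star q (twist q c g) (lderiv c h)) t"
    using Cons by simp
  also have "\<dots> = star q f (star q g h) (c # t)"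
    by (simp add: star_Cons lderiv_star star_add_right)
  finally show ?case .
qed

section \<open>q-integers and weighted lattice paths\<close>

lemma qint_nat: "qint q (int n) = (q ^ n - inverse (q ^ n)) / (q - inverse q)"
  unfolding qint_def by (simp add: power_int_minus)

lemma qint_0 [simp]: "qint q 0 = 0"
  unfolding qint_def by simp

lemma qint_1: "q - inverse q \<noteq> 0 \<Longrightarrow> qint q 1 = 1"
  unfolding qint_def by simp

lemma qint_1_nonzeroD:
  assumes "qint q 1 \<noteq> 0"
  shows "q \<noteq> 0" "q - inverse q \<noteq> 0"
  using assms unfolding qint_def by auto

lemma qint_add_nat:
  "qint q (int a + int b) = q ^ a * qint q (int b) + inverse (q ^ b) * qint q (int a)"
proof -
  have "q^a * q^b - inverse (q^a * q^b)
      = q^a * (q^b - inverse (q^b)) + inverse (q^b) * (q^a - inverse (q^a))"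
    by (simp add: algebra_simps inverse_mult_distrib)
  then show ?thesis
    unfolding of_nat_add[symmetric] qint_nat power_add
    by (simp add: add_divide_distrib)
qed

definition height :: "letter list \<Rightarrow> int" where
  "height w = (\<Sum>l\<leftarrow>w. bar l)"

definition xcount :: "letter list \<Rightarrow> nat" where
  "xcount w = length (filter (\<lambda>l. l = X) w)"

lemma height_simps [simp]:
  "height [] = 0" "height (X # w) = 1 + height w" "height (Y # w) = height w - 1"
  by (auto simp: height_def bar_def)

lemma xcount_simps [simp]:
  "xcount [] = 0" "xcount (X # w) = Suc (xcount w)" "xcount (Y # w) = xcount w"
  by (auto simp: xcount_def)

lemma sum_pairing_eq_height: "(\<Sum>l\<leftarrow>a. pairing l c) = 2 * bar c * height a"
proof (induction a)
  case (Cons l a)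
  then show ?case by (cases l; cases c) (auto simp: pairing_def bar_def algebra_simps)
qed simp

text \<open>excursion q h w is the weight of w as a path from height h to 0 that stays nonnegative,
each step weighted by [1 + height reached]_q (see excursion_eq_path_weight), and 0 if w is no
such path. first_passage q j w is the weight of w as a path from height j that reaches 0 only at
its last step, which has weight 1, every other step being weighted by [height reached]_q.\<close>

fun excursion :: "'a::field \<Rightarrow> nat \<Rightarrow> letter list \<Rightarrow> 'a" where
  "excursion q h [] = (if h = 0 then 1 else 0)"
| "excursion q h (X # w) = qint q (int h + 2) * excursion q (h + 1) w"
| "excursion q h (Y # w) = (if h = 0 then 0 else qint q (int h) * excursion q (h - 1) w)"

fun first_passage :: "'a::field \<Rightarrow> nat \<Rightarrow> letter list \<Rightarrow> 'a" where
  "first_passage q j [] = 0"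
| "first_passage q j (X # w) = qint q (int j + 1) * first_passage q (j + 1) w"
| "first_passage q j (Y # w) =
     (if j = 0 then 0
      else if j = 1 then word [] w
      else qint q (int j - 1) * first_passage q (j - 1) w)"

definition xscale :: "'a::field \<Rightarrow> 'a vec \<Rightarrow> 'a vec" where
  "xscale s f = (\<lambda>w. s ^ xcount w * f w)"

lemma excursion_nonzero_height: "excursion q h w \<noteq> 0 \<Longrightarrow> height w = - int h"
proof (induction w arbitrary: h)
  case (Cons l w)
  then show ?case by (cases l) (auto split: if_splits)
qed (simp split: if_splits)

lemma first_passage_nonzero_height: "first_passage q j w \<noteq> 0 \<Longrightarrow> height w = - int j"
proof (induction w arbitrary: j)
  case (Cons l w)
  then show ?case by (cases l) (auto simp: word_apply split: if_splits)
qed simp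

lemma twist_height_const:
  assumes "q \<noteq> 0" and "\<And>a. f a \<noteq> 0 \<Longrightarrow> height a = - int h"
  shows "twist q X f = (\<lambda>a. inverse (q ^ (2 * h)) * f a)" "twist q Y f = (\<lambda>a. q ^ (2 * h) * f a)"
proof -
  have const: "q powi (2 * bar c * height a) * f a = q powi (- 2 * bar c * int h) * f a" for c a
    using assms(2)[of a] by (cases "f a = 0") auto
  show "twist q X f = (\<lambda>a. inverse (q ^ (2 * h)) * f a)" "twist q Y f = (\<lambda>a. q ^ (2 * h) * f a)"
    unfolding twist_def sum_pairing_eq_height const
    by (simp_all add: bar_def power_int_minus flip: power_int_of_nat)
qed

lemma twist_excursion:
  "q \<noteq> 0 \<Longrightarrow> twist q X (excursion q h) = (\<lambda>a. inverse (q ^ (2 * h)) * excursion q h a)"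
  "q \<noteq> 0 \<Longrightarrow> twist q Y (excursion q h) = (\<lambda>a. q ^ (2 * h) * excursion q h a)"
  by (rule twist_height_const; use excursion_nonzero_height in blast)+

lemma twist_xscale_first_passage:
  "q \<noteq> 0 \<Longrightarrow> twist q X (xscale s (first_passage q j))
                = (\<lambda>a. inverse (q ^ (2 * j)) * xscale s (first_passage q j) a)"
  "q \<noteq> 0 \<Longrightarrow> twist q Y (xscale s (first_passage q j))
                = (\<lambda>a. q ^ (2 * j) * xscale s (first_passage q j) a)"
  by (rule twist_height_const; use first_passage_nonzero_height in \<open>force simp: xscale_def\<close>)+

lemma lderiv_excursion:
  "lderiv X (excursion q h) = (\<lambda>t. qint q (int h + 2) * excursion q (h + 1) t)"
  "lderiv Y (excursion q h) = (\<lambda>t. qint q (int h) * excursion q (h - 1) t)"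
  by (auto simp: lderiv_def)

lemma lderiv_xscale_first_passage:
  "lderiv X (xscale s (first_passage q j))
     = (\<lambda>t. (s * qint q (int j + 1)) * xscale s (first_passage q (j + 1)) t)"
  "lderiv Y (xscale s (first_passage q 0)) = (\<lambda>t. 0)"
  "lderiv Y (xscale s (first_passage q (Suc 0))) = word []"
  "lderiv Y (xscale s (first_passage q (Suc (Suc j))))
     = (\<lambda>t. qint q (int j + 1) * xscale s (first_passage q (Suc j)) t)"
  by (auto simp: lderiv_def xscale_def word_apply algebra_simps)

section \<open>The grading by the number of x's\<close>

definition xpart :: "nat \<Rightarrow> 'a::field vec \<Rightarrow> 'a vec" where
  "xpart n f = (\<lambda>w. if xcount w = n then f w else 0)"

lemma qsh_nonzero_xcount: "qsh q a b w \<noteq> 0 \<Longrightarrow> xcount w = xcount a + xcount b"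
proof (induction q a b arbitrary: w rule: qsh.induct)
  case (3 q a u b v)
  show ?case
  proof (cases w)
    case (Cons d w')
    then have "qsh q u (b # v) w' \<noteq> 0 \<and> d = a \<or> qsh q (a # u) v w' \<noteq> 0 \<and> d = b"
      using "3.prems" by (auto split: if_splits)
    then show ?thesis using "3.IH" Cons by (cases d; cases a; cases b) auto
  qed (use "3.prems" in simp)
qed (auto simp: word_apply split: if_splits)

lemma xpart_star: "xpart n (star q f g) w = (\<Sum>k\<le>n. star q (xpart k f) (xpart (n - k) g) w)"
proof -
  have split: "(\<Sum>k\<le>n. xpart k f a * xpart (n - k) g b * qsh q a b w)
      = (if xcount w = n then f a * g b * qsh q a b w else 0)" for a b
  proof (cases "qsh q a b w = 0")
    case False
    then have xcount_w: "xcount w = xcount a + xcount b" by (rule qsh_nonzero_xcount)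
    then have "(\<Sum>k\<le>n. xpart k f a * xpart (n - k) g b * qsh q a b w)
        = (\<Sum>k\<le>n. if k = xcount a then (if xcount w = n then f a * g b * qsh q a b w else 0) else 0)"
      by (intro sum.cong) (auto simp: xpart_def)
    then show ?thesis using xcount_w by auto
  qed simp
  have "xpart n (star q f g) w
      = (\<Sum>a\<in>words_le (length w). \<Sum>b\<in>words_le (length w).
           if xcount w = n then f a * g b * qsh q a b w else 0)"
    by (simp add: xpart_def star_eq_sum)
  also have "\<dots> = (\<Sum>a\<in>words_le (length w). \<Sum>b\<in>words_le (length w).
                     \<Sum>k\<le>n. xpart k f a * xpart (n - k) g b * qsh q a b w)"
    by (simp only: split)
  finally show ?thesis
    by (simp add: star_eq_sum sum.swap[where B = "{..n}"])
qed

lemma xpart_star': "xpart n (star q f g) w = (\<Sum>k\<le>n. star q (xpart (n - k) f) (xpart k g) w)"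
proof -
  have "(\<Sum>k\<le>n. star q (xpart (n - k) f) (xpart (n - (n - k)) g) w)
      = (\<Sum>k\<le>n. star q (xpart (n - k) f) (xpart k g) w)"
    by (intro sum.cong) auto
  then show ?thesis
    unfolding xpart_star
    using sum.atLeastAtMost_rev[of "\<lambda>k. star q (xpart k f) (xpart (n - k) g) w" 0 n]
    by (simp add: atLeast0AtMost)
qed

lemma xpart_xscale: "xpart k (xscale s f) = (\<lambda>w. s^k * xpart k f w)"
  by (auto simp: xpart_def xscale_def)

definition path_weight :: "'a::field \<Rightarrow> int \<Rightarrow> letter list \<Rightarrow> 'a" where
  "path_weight q h w =
     (if (\<forall>i \<le> length w. 0 \<le> h + height (take i w)) \<and> h + height w = 0
      then (\<Prod>i\<in>{1..length w}. qint q (1 + h + height (take i w))) else 0)"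

lemma path_weight_Cons:
  assumes "0 \<le> h"
  shows "path_weight q h (l # w)
       = (if 0 \<le> h + bar l then qint q (1 + h + bar l) * path_weight q (h + bar l) w else 0)"
proof -
  have height_Cons: "height (l # w) = bar l + height w" for w
    by (simp add: height_def)
  have "(\<Prod>i\<in>{1..length (l # w)}. qint q (1 + h + height (take i (l # w))))
      = qint q (1 + h + bar l)
        * (\<Prod>i\<in>{Suc 1..Suc (length w)}. qint q (1 + h + height (take i (l # w))))"
    by (subst prod.atLeast_Suc_atMost) (auto simp: height_Cons)
  also have "(\<Prod>i\<in>{Suc 1..Suc (length w)}. qint q (1 + h + height (take i (l # w))))
      = (\<Prod>i\<in>{1..length w}. qint q (1 + (h + bar l) + height (take i w)))"
    by (subst prod.shift_bounds_cl_Suc_ivl) (simp add: height_Cons algebra_simps)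
  finally have prod: "(\<Prod>i\<in>{1..length (l # w)}. qint q (1 + h + height (take i (l # w))))
      = qint q (1 + h + bar l) * (\<Prod>i\<in>{1..length w}. qint q (1 + (h + bar l) + height (take i w)))" .
  have nonneg: "(\<forall>i \<le> length (l # w). 0 \<le> h + height (take i (l # w)))
      \<longleftrightarrow> 0 \<le> h + bar l \<and> (\<forall>i \<le> length w. 0 \<le> (h + bar l) + height (take i w))"
    using assms unfolding less_Suc_eq_le[symmetric]
    by (simp add: All_less_Suc2 height_Cons algebra_simps)
  have "h + height (l # w) = (h + bar l) + height w"
    by (simp add: height_Cons)
  then show ?thesis
    unfolding path_weight_def nonneg prod by auto
qed

lemma excursion_eq_path_weight: "excursion q h w = path_weight q (int h) w"
proof (induction w arbitrary: h)
  case Nil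
  then show ?case by (simp add: path_weight_def)
next
  case (Cons l w)
  then show ?case
    by (cases l; cases h) (simp_all add: path_weight_Cons bar_def add.commute add.left_commute)
qed

lemma length_eq_xcount_height: "int (length w) = 2 * int (xcount w) - height w"
proof (induction w)
  case (Cons l w)
  then show ?case by (cases l) auto
qed simp

text \<open>The hypothesis is needed because the product in Cn starts with the factor [1]_q, which is
0 when q - q^-1 = 0 (division by zero).\<close>

lemma Cn_eq_xpart_excursion:
  assumes "q - inverse q \<noteq> 0"
  shows "Cn q n = xpart n (excursion q 0)"
proof
  fix w
  have "catalan w \<longleftrightarrow> (\<forall>i \<le> length w. 0 \<le> height (take i w)) \<and> height w = 0"
  proof safe
    fix i assume "catalan w" "i \<le> length w"
    then consider "i = 0" | "i = length w" | "1 \<le> i \<and> i \<le> length w - 1" by linarith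
    then show "0 \<le> height (take i w)"
      by cases (use \<open>catalan w\<close> in \<open>auto simp: catalan_def height_def\<close>)
  qed (auto simp: catalan_def height_def)
  then have "length w = 2 * n \<and> catalan w
      \<longleftrightarrow> xcount w = n \<and> (\<forall>i \<le> length w. 0 \<le> height (take i w)) \<and> height w = 0"
    using length_eq_xcount_height[of w] by auto
  moreover have "(\<Prod>i\<le>length w. qint q (1 + height (take i w)))
      = (\<Prod>i\<in>{1..length w}. qint q (1 + height (take i w)))"
    using qint_1[OF assms] by (simp add: atMost_atLeast0 prod.atLeast_Suc_atMost)
  ultimately show "Cn q n w = xpart n (excursion q 0) w"
    by (auto simp: Cn_def xpart_def excursion_eq_path_weight path_weight_def height_def[symmetric])
qed

lemma Cn_0: "q - inverse q \<noteq> 0 \<Longrightarrow> Cn q 0 = word []"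
  by (auto simp: Cn_def word_apply catalan_def qint_1)

lemma cat_word_X_Cons: "cat (word [X]) g (c # w) = (if c = X then g w else 0)"
proof -
  have "cat (word [X]) g (c # w) = (\<Sum>i\<le>length w. word [X] (c # take i w) * g (drop i w))"
    unfolding cat_def
    by (simp only: length_Cons sum.atMost_Suc_shift take_Suc_Cons drop_Suc_Cons take_0 word_apply)
       simp
  also have "\<dots> = (\<Sum>i\<le>length w. if i = 0 then word [X] [c] * g w else 0)"
    by (intro sum.cong) (auto simp: word_apply)
  finally show ?thesis by (simp add: word_apply)
qed

lemma cat_word_Y_snoc: "cat g (word [Y]) (w @ [c]) = (if c = Y then g w else 0)"
proof -
  have "cat g (word [Y]) (w @ [c])
      = (\<Sum>i\<le>length w. g (take i (w @ [c])) * word [Y] (drop i w @ [c]))"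
    by (simp add: cat_def word_apply)
  also have "\<dots> = (\<Sum>i\<le>length w. if i = length w then g w * word [Y] [c] else 0)"
    by (intro sum.cong) (auto simp: word_apply)
  finally show ?thesis by (simp add: word_apply)
qed

lemma cat_word_Nil_left: "cat (word [X]) g [] = 0" and cat_word_Nil_right: "cat g (word [Y]) [] = 0"
  by (simp_all add: cat_def word_apply)

lemma first_passage_Suc_snoc:
  "first_passage q (Suc i) (w @ [c]) = (if c = Y then excursion q i w else 0)"
proof (induction w arbitrary: i)
  case Nil
  then show ?case by (cases c) (auto simp: word_apply)
next
  case (Cons l w)
  then show ?case by (cases l; cases i) (auto simp: word_apply)
qed

lemma xcount_append: "xcount (u @ v) = xcount u + xcount v"
  by (simp add: xcount_def)

lemma xwy_Cn_eq_xpart_first_passage: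
  assumes "q - inverse q \<noteq> 0" and "1 \<le> k"
  shows "xwy (Cn q (k - 1)) = xpart k (first_passage q 0)"
proof
  fix w
  show "xwy (Cn q (k - 1)) w = xpart k (first_passage q 0) w"
  proof (cases w)
    case (Cons l u)
    show ?thesis
    proof (cases l)
      case X
      then show ?thesis
        using Cons assms
        by (cases u rule: rev_exhaust)
           (auto simp: xwy_def cat_word_X_Cons cat_word_Y_snoc cat_word_Nil_right xpart_def
             qint_1[OF assms(1)] first_passage_Suc_snoc xcount_append Cn_eq_xpart_excursion)
    qed (simp add: Cons xwy_def cat_word_X_Cons xpart_def)
  qed (simp add: xwy_def cat_word_Nil_left xpart_def)
qed

lemma xpart_0_first_passage_0: "xpart 0 (first_passage q 0) = (\<lambda>w. 0)"
proof
  fix w show "xpart 0 (first_passage q 0) w = 0"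
  proof (cases w)
    case (Cons l u)
    then show ?thesis by (cases l) (auto simp: xpart_def)
  qed (simp add: xpart_def)
qed

section \<open>The commutator identity\<close>

context
  fixes q :: "'a::field"
  assumes qint_nonzero: "\<And>k. 0 < k \<Longrightarrow> qint q (int k) \<noteq> 0"
begin

lemma q_nonzero: "q \<noteq> 0" and q_minus_inverse_nonzero: "q - inverse q \<noteq> 0"
  using qint_1_nonzeroD qint_nonzero[of 1] by auto

lemma qint_Suc_nonzero: "qint q (int j + 1) \<noteq> 0"
  using qint_nonzero[of "Suc j"] by (simp add: add.commute)

lemma first_passage_star_excursion_X:
  assumes "1 \<le> j"
    and IH: "\<And>j h. 1 \<le> j \<Longrightarrow> star q (xscale (q^2) (first_passage q j)) (excursion q h) t
                                 = q^(j*h) / qint q (int j) * excursion q (h + j) t"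
  shows "star q (xscale (q^2) (first_passage q j)) (excursion q h) (X # t)
       = q^(j*h) / qint q (int j) * excursion q (h + j) (X # t)"
proof -
  have qj: "qint q (int j) \<noteq> 0" using assms(1) qint_nonzero by simp
  have "star q (xscale (q^2) (first_passage q j)) (excursion q h) (X # t)
      = (q^2 * qint q (int j + 1))
          * star q (xscale (q^2) (first_passage q (j + 1))) (excursion q h) t
      + inverse (q^(2*j))
          * (qint q (int h + 2) * star q (xscale (q^2) (first_passage q j)) (excursion q (h + 1)) t)"
    by (simp add: star_Cons lderiv_xscale_first_passage twist_xscale_first_passage[OF q_nonzero]
        lderiv_excursion star_scale_left star_scale_right)
  also have "\<dots> = q^(j*h) / qint q (int j)
      * ((q^h * q * q * qint q (int j) + inverse (q^j) * qint q (int h + 2))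
         * excursion q (h + j + 1) t)"
    using IH[of "j + 1" h] IH[of j "h + 1"] assms(1) qj qint_Suc_nonzero[of j] q_nonzero
    by (simp add: field_simps power_add power_mult_distrib power2_eq_square mult_2 mult_2_right
        ac_simps)
  also have "\<dots> = q^(j*h) / qint q (int j) * excursion q (h + j) (X # t)"
    using qint_add_nat[of q "h + 2" j] by (simp add: power_add power2_eq_square algebra_simps)
  finally show ?thesis .
qed

lemma first_passage_1_star_excursion_Y:
  assumes IH: "\<And>h. star q (xscale (q^2) (first_passage q 1)) (excursion q h) t
                    = q^h * excursion q (h + 1) t"
  shows "star q (xscale (q^2) (first_passage q 1)) (excursion q h) (Y # t)
       = q^h * excursion q (h + 1) (Y # t)"
proof -
  have qint_Suc: "q^h * qint q (1 + int h) = q * qint q (int h) * q^h + 1"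
    using qint_add_nat[of q 1 h] q_nonzero
    by (simp add: qint_1[OF q_minus_inverse_nonzero] field_simps add.commute)
  show ?thesis
  proof (cases h)
    case 0
    then show ?thesis
      by (simp add: star_Cons lderiv_xscale_first_passage lderiv_excursion star_scale_right
          star_unit_left qint_1[OF q_minus_inverse_nonzero])
  next
    case (Suc h')
    have "star q (xscale (q^2) (first_passage q 1)) (excursion q h) (Y # t)
        = excursion q h t
        + q^2 * (qint q (int h) * star q (xscale (q^2) (first_passage q 1)) (excursion q h') t)"
      using Suc
      by (simp add: star_Cons lderiv_xscale_first_passage twist_xscale_first_passage[OF q_nonzero]
          lderiv_excursion star_scale_left star_scale_right star_unit_left)
    also have "\<dots> = (q * qint q (int h) * q^h + 1) * excursion q h t"
      using IH[of h'] Suc by (simp add: algebra_simps power2_eq_square)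
    also have "\<dots> = q^h * excursion q (h + 1) (Y # t)"
      by (simp add: qint_Suc[symmetric])
    finally show ?thesis .
  qed
qed

lemma first_passage_star_excursion_Y:
  assumes "2 \<le> j"
    and IH: "\<And>j h. 1 \<le> j \<Longrightarrow> star q (xscale (q^2) (first_passage q j)) (excursion q h) t
                                 = q^(j*h) / qint q (int j) * excursion q (h + j) t"
  shows "star q (xscale (q^2) (first_passage q j)) (excursion q h) (Y # t)
       = q^(j*h) / qint q (int j) * excursion q (h + j) (Y # t)"
proof -
  obtain i where j: "j = Suc (Suc i)" using assms(1) by (metis add_2_eq_Suc le_Suc_ex)
  have qj: "qint q (int j) \<noteq> 0" using qint_nonzero[of j] j by simp
  have qi: "qint q (int i + 1) \<noteq> 0" by (rule qint_Suc_nonzero)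
  show ?thesis
  proof (cases h)
    case 0
    have "star q (xscale (q^2) (first_passage q j)) (excursion q h) (Y # t)
        = qint q (int i + 1) * star q (xscale (q^2) (first_passage q (Suc i))) (excursion q 0) t"
      using j 0
      by (simp add: star_Cons lderiv_xscale_first_passage twist_xscale_first_passage[OF q_nonzero]
          lderiv_excursion star_scale_left star_scale_right)
    then show ?thesis
      using IH[of "Suc i" 0] j 0 qi qj by (simp add: add.commute)
  next
    case (Suc h')
    have "star q (xscale (q^2) (first_passage q j)) (excursion q h) (Y # t)
        = qint q (int i + 1) * star q (xscale (q^2) (first_passage q (Suc i))) (excursion q h) t
        + q^(2*j) * (qint q (int h) * star q (xscale (q^2) (first_passage q j)) (excursion q h') t)"
      using j Suc
      by (simp add: star_Cons lderiv_xscale_first_passage twist_xscale_first_passage[OF q_nonzero]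
          lderiv_excursion star_scale_left star_scale_right)
    also have "\<dots> = q^(j*h) / qint q (int j)
        * ((q^j * qint q (int h) + inverse (q^h) * qint q (int j)) * excursion q (h' + j) t)"
      using IH[of "Suc i" h] IH[of j h'] j Suc qi qj q_nonzero
      by (simp add: field_simps power_add power_mult_distrib power2_eq_square mult_2 mult_2_right
        ac_simps)
    also have "\<dots> = q^(j*h) / qint q (int j) * excursion q (h + j) (Y # t)"
      using qint_add_nat[of q j h] j Suc by (simp add: algebra_simps)
    finally show ?thesis .
  qed
qed

lemma first_passage_star_excursion:
  assumes "1 \<le> j"
  shows "star q (xscale (q^2) (first_passage q j)) (excursion q h) w
       = q^(j*h) / qint q (int j) * excursion q (h + j) w"
  using assms
proof (induction w arbitrary: j h)
  case Nil
  then show ?case by (simp add: star_Nil xscale_def)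
next
  case (Cons c t)
  consider "c = X" | "c = Y" "j = 1" | "c = Y" "2 \<le> j"
    using Cons.prems by (cases c; cases "j = 1") auto
  then show ?case
  proof cases
    case 1
    then show ?thesis using first_passage_star_excursion_X[OF Cons.prems Cons.IH] by simp
  next
    case 2
    then show ?thesis
      using first_passage_1_star_excursion_Y[of t h] Cons.IH[of 1]
      by (simp add: qint_1[OF q_minus_inverse_nonzero])
  next
    case 3
    then show ?thesis using first_passage_star_excursion_Y[OF _ Cons.IH] by simp
  qed
qed

lemma excursion_star_first_passage_X:
  assumes "1 \<le> j"
    and IH: "\<And>j h. 1 \<le> j \<Longrightarrow> star q (excursion q h) (xscale (inverse (q^2)) (first_passage q j)) t
                                 = q^(j*h) / qint q (int j) * excursion q (h + j) t"
  shows "star q (excursion q h) (xscale (inverse (q^2)) (first_passage q j)) (X # t)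
       = q^(j*h) / qint q (int j) * excursion q (h + j) (X # t)"
proof -
  have qj: "qint q (int j) \<noteq> 0" using assms(1) qint_nonzero by simp
  define P A B where "P = q^(j*h)" and "A = q^h" and "B = q^j"
  have "A \<noteq> 0" using q_nonzero by (simp add: A_def)
  have "star q (excursion q h) (xscale (inverse (q^2)) (first_passage q j)) (X # t)
      = qint q (int h + 2)
          * star q (excursion q (h + 1)) (xscale (inverse (q^2)) (first_passage q j)) t
      + inverse (q^(2*h)) * ((inverse (q^2) * qint q (int j + 1))
          * star q (excursion q h) (xscale (inverse (q^2)) (first_passage q (j + 1))) t)"
    by (simp add: star_Cons lderiv_xscale_first_passage twist_excursion[OF q_nonzero]
        lderiv_excursion star_scale_left star_scale_right)
  also have "\<dots> = qint q (int h + 2) * (P * B / qint q (int j) * excursion q (h + j + 1) t)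
      + inverse (A * A) * ((inverse (q^2) * qint q (int j + 1))
          * (P * A / qint q (int j + 1) * excursion q (h + j + 1) t))"
    using IH[of j "h + 1"] IH[of "j + 1" h] assms(1) qint_Suc_nonzero[of j]
    by (simp add: P_def A_def B_def power_add power_mult_distrib mult_2 mult_2_right algebra_simps)
  also have "\<dots> = P / qint q (int j)
      * ((B * qint q (int h + 2) + inverse (A * q * q) * qint q (int j)) * excursion q (h + j + 1) t)"
    using qj qint_Suc_nonzero[of j] q_nonzero \<open>A \<noteq> 0\<close> by (simp add: field_simps power2_eq_square)
  also have "\<dots> = q^(j*h) / qint q (int j) * excursion q (h + j) (X # t)"
    using qint_add_nat[of q j "h + 2"]
    by (simp add: P_def A_def B_def power_add power2_eq_square algebra_simps)
  finally show ?thesis .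
qed

lemma excursion_star_first_passage_1_Y:
  assumes IH: "\<And>h. star q (excursion q h) (xscale (inverse (q^2)) (first_passage q 1)) t
                    = q^h * excursion q (h + 1) t"
  shows "star q (excursion q h) (xscale (inverse (q^2)) (first_passage q 1)) (Y # t)
       = q^h * excursion q (h + 1) (Y # t)"
proof -
  have qint_Suc: "qint q (1 + int h) = q^h + inverse q * qint q (int h)"
    using qint_add_nat[of q h 1] by (simp add: qint_1[OF q_minus_inverse_nonzero] add.commute)
  show ?thesis
  proof (cases h)
    case 0
    then show ?thesis
      by (simp add: star_Cons lderiv_xscale_first_passage lderiv_excursion
          twist_excursion[OF q_nonzero]
          star_scale_left star_unit_right qint_1[OF q_minus_inverse_nonzero])
  next
    case (Suc h')
    have "star q (excursion q h) (xscale (inverse (q^2)) (first_passage q 1)) (Y # t)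
        = qint q (int h) * star q (excursion q h') (xscale (inverse (q^2)) (first_passage q 1)) t
        + q^(2*h) * excursion q h t"
      using Suc by (simp add: star_Cons lderiv_xscale_first_passage twist_excursion[OF q_nonzero]
          lderiv_excursion star_scale_left star_scale_right star_unit_right)
    also have "\<dots> = (qint q (int h) * q^h * inverse q + q^(2*h)) * excursion q h t"
      using IH[of h'] Suc q_nonzero by (simp add: field_simps)
    also have "\<dots> = q^h * (qint q (1 + int h) * excursion q h t)"
      unfolding qint_Suc power_add mult_2 by (simp only: ring_distribs mult_ac add_ac)
    also have "\<dots> = q^h * excursion q (h + 1) (Y # t)"
      using Suc by simp
    finally show ?thesis .
  qed
qed

lemma excursion_star_first_passage_Y:
  assumes "2 \<le> j"
    and IH: "\<And>j h. 1 \<le> j \<Longrightarrow> star q (excursion q h) (xscale (inverse (q^2)) (first_passage q j)) t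
                                 = q^(j*h) / qint q (int j) * excursion q (h + j) t"
  shows "star q (excursion q h) (xscale (inverse (q^2)) (first_passage q j)) (Y # t)
       = q^(j*h) / qint q (int j) * excursion q (h + j) (Y # t)"
proof -
  obtain i where j: "j = Suc (Suc i)" using assms(1) by (metis add_2_eq_Suc le_Suc_ex)
  have qj: "qint q (int j) \<noteq> 0" using qint_nonzero[of j] j by simp
  have qi: "qint q (int i + 1) \<noteq> 0" by (rule qint_Suc_nonzero)
  show ?thesis
  proof (cases h)
    case 0
    have "star q (excursion q h) (xscale (inverse (q^2)) (first_passage q j)) (Y # t)
        = qint q (int i + 1)
          * star q (excursion q 0) (xscale (inverse (q^2)) (first_passage q (Suc i))) t"
      using j 0 by (simp add: star_Cons lderiv_xscale_first_passage twist_excursion[OF q_nonzero]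
          lderiv_excursion star_scale_left star_scale_right)
    then show ?thesis
      using IH[of "Suc i" 0] j 0 qi qj by (simp add: add.commute)
  next
    case (Suc h')
    have "star q (excursion q h) (xscale (inverse (q^2)) (first_passage q j)) (Y # t)
        = qint q (int h) * star q (excursion q h') (xscale (inverse (q^2)) (first_passage q j)) t
        + q^(2*h) * (qint q (int i + 1)
            * star q (excursion q h) (xscale (inverse (q^2)) (first_passage q (Suc i))) t)"
      using j Suc by (simp add: star_Cons lderiv_xscale_first_passage twist_excursion[OF q_nonzero]
          lderiv_excursion star_scale_left star_scale_right)
    also have "\<dots> = q^(j*h) / qint q (int j)
        * ((q^h * qint q (int j) + inverse (q^j) * qint q (int h)) * excursion q (h' + j) t)"
      using IH[of "Suc i" h] IH[of j h'] j Suc qi qj q_nonzero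
      by (simp add: field_simps power_add power_mult_distrib power2_eq_square mult_2 mult_2_right
        ac_simps)
    also have "\<dots> = q^(j*h) / qint q (int j) * excursion q (h + j) (Y # t)"
      using qint_add_nat[of q h j] j Suc by (simp add: algebra_simps)
    finally show ?thesis .
  qed
qed

lemma excursion_star_first_passage:
  assumes "1 \<le> j"
  shows "star q (excursion q h) (xscale (inverse (q^2)) (first_passage q j)) w
       = q^(j*h) / qint q (int j) * excursion q (h + j) w"
  using assms
proof (induction w arbitrary: j h)
  case Nil
  then show ?case by (simp add: star_Nil xscale_def)
next
  case (Cons c t)
  consider "c = X" | "c = Y" "j = 1" | "c = Y" "2 \<le> j"
    using Cons.prems by (cases c; cases "j = 1") auto
  then show ?case
  proof cases
    case 1
    then show ?thesis using excursion_star_first_passage_X[OF Cons.prems Cons.IH] by simp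
  next
    case 2
    then show ?thesis
      using excursion_star_first_passage_1_Y[of t h] Cons.IH[of 1]
      by (simp add: qint_1[OF q_minus_inverse_nonzero])
  next
    case 3
    then show ?thesis using excursion_star_first_passage_Y[OF _ Cons.IH] by simp
  qed
qed

lemma excursion_commutator_Cons_X:
  assumes IH: "(q - inverse q) * (of_nat (xcount t) * excursion q (h + 1) t)
      = star q (xscale (q^2) (first_passage q 0)) (excursion q (h + 1)) t
      - star q (excursion q (h + 1)) (xscale (inverse (q^2)) (first_passage q 0)) t"
  shows "(q - inverse q) * (of_nat (xcount (X # t)) * excursion q h (X # t))
      = star q (xscale (q^2) (first_passage q 0)) (excursion q h) (X # t)
      - star q (excursion q h) (xscale (inverse (q^2)) (first_passage q 0)) (X # t)"
proof -
  let ?G = "\<lambda>s. xscale s (first_passage q 0)"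
  have q1: "qint q 1 = 1"
    by (rule qint_1[OF q_minus_inverse_nonzero])
  have "star q (?G (q^2)) (excursion q h) (X # t)
      = q^2 * (q^h * excursion q (h + 1) t)
      + qint q (int h + 2) * star q (?G (q^2)) (excursion q (h + 1)) t"
    using first_passage_star_excursion[of 1 h t]
    by (simp add: star_Cons lderiv_xscale_first_passage twist_xscale_first_passage[OF q_nonzero]
        lderiv_excursion star_scale_left star_scale_right q1)
  moreover have "star q (excursion q h) (?G (inverse (q^2))) (X # t)
      = qint q (int h + 2) * star q (excursion q (h + 1)) (?G (inverse (q^2))) t
      + inverse (q^(2*h)) * (inverse (q^2) * (q^h * excursion q (h + 1) t))"
    using excursion_star_first_passage[of 1 h t]
    by (simp add: star_Cons lderiv_xscale_first_passage twist_excursion[OF q_nonzero]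
        lderiv_excursion star_scale_left star_scale_right q1)
  ultimately have "star q (?G (q^2)) (excursion q h) (X # t)
      - star q (excursion q h) (?G (inverse (q^2))) (X # t)
      = (q^2 - inverse (q^(2*h)) * inverse (q^2)) * q^h * excursion q (h + 1) t
      + qint q (int h + 2) * (star q (?G (q^2)) (excursion q (h + 1)) t
                              - star q (excursion q (h + 1)) (?G (inverse (q^2))) t)"
    by (simp add: algebra_simps)
  also have "(q^2 - inverse (q^(2*h)) * inverse (q^2)) * q^h = (q - inverse q) * qint q (int h + 2)"
  proof -
    have "(q^2 - inverse (q^(2*h)) * inverse (q^2)) * q^h = q^(h + 2) - inverse (q^(h + 2))"
      using q_nonzero by (simp add: field_simps power_add mult_2 mult_2_right power2_eq_square)
    then show ?thesis
      using qint_nat[of q "h + 2"] q_minus_inverse_nonzero by (simp add: add.commute)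
  qed
  also note IH[symmetric]
  finally show ?thesis
    by (simp add: algebra_simps)
qed

lemma excursion_commutator:
  "(q - inverse q) * (of_nat (xcount w) * excursion q h w)
   = star q (xscale (q^2) (first_passage q 0)) (excursion q h) w
   - star q (excursion q h) (xscale (inverse (q^2)) (first_passage q 0)) w"
proof (induction w arbitrary: h)
  case Nil
  then show ?case by (simp add: star_Nil xscale_def)
next
  case (Cons c t)
  show ?case
  proof (cases c)
    case X
    then show ?thesis using excursion_commutator_Cons_X[OF Cons.IH] by simp
  next
    case Y
    have "star q (xscale (q^2) (first_passage q 0)) (excursion q h) (Y # t)
        - star q (excursion q h) (xscale (inverse (q^2)) (first_passage q 0)) (Y # t)
        = qint q (int h) * (star q (xscale (q^2) (first_passage q 0)) (excursion q (h - 1)) t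
            - star q (excursion q (h - 1)) (xscale (inverse (q^2)) (first_passage q 0)) t)"
      by (simp add: star_Cons lderiv_xscale_first_passage twist_xscale_first_passage[OF q_nonzero]
          twist_excursion[OF q_nonzero] lderiv_excursion star_scale_left star_scale_right
          right_diff_distrib)
    then show ?thesis
      using Y Cons.IH[of "h - 1"] by (simp add: mult_ac)
  qed
qed

lemma Cn_recursion:
  "(q - inverse q) * (of_nat n * Cn q n w)
   = (\<Sum>k\<in>{1..n}. q^(2*k) * star q (xwy (Cn q (k - 1))) (Cn q (n - k)) w
                 - inverse (q^(2*k)) * star q (Cn q (n - k)) (xwy (Cn q (k - 1))) w)"
proof -
  let ?G = "\<lambda>s. xscale s (first_passage q 0)"
  have C: "xpart m (excursion q 0) = Cn q m" for m
    using Cn_eq_xpart_excursion[OF q_minus_inverse_nonzero] by simp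
  have G: "xpart k (first_passage q 0) = (if k = 0 then (\<lambda>w. 0) else xwy (Cn q (k - 1)))" for k
    using xwy_Cn_eq_xpart_first_passage[OF q_minus_inverse_nonzero, of k] xpart_0_first_passage_0[of q]
    by simp
  have "xpart n (star q (?G (q^2)) (excursion q 0)) w
      = (\<Sum>k\<le>n. q^(2*k) * star q (xpart k (first_passage q 0)) (Cn q (n - k)) w)"
    by (simp add: xpart_star xpart_xscale star_scale_left C power_mult)
  moreover have "xpart n (star q (excursion q 0) (?G (inverse (q^2)))) w
      = (\<Sum>k\<le>n. inverse (q^(2*k)) * star q (Cn q (n - k)) (xpart k (first_passage q 0)) w)"
    by (simp add: xpart_star' xpart_xscale star_scale_right C power_mult power_inverse)
  moreover have "(q - inverse q) * (of_nat n * Cn q n w)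
      = xpart n (star q (?G (q^2)) (excursion q 0)) w
      - xpart n (star q (excursion q 0) (?G (inverse (q^2)))) w"
    using excursion_commutator[of w 0] by (auto simp: C[symmetric] xpart_def)
  moreover have "{..n} = insert 0 {1..n}"
    by auto
  ultimately show ?thesis
    by (simp add: G sum_subtractf)
qed

end

section \<open>Homogeneous polynomials\<close>

definition compositions :: "nat \<Rightarrow> nat list set" where
  "compositions m = {ks. set ks \<subseteq> {1..m} \<and> sum_list ks = m}"

lemma finite_compositions: "finite (compositions m)"
proof (rule finite_subset)
  have "length ks \<le> sum_list ks" if "set ks \<subseteq> {1..m}" for ks
    using that by (induction ks) auto
  then show "compositions m \<subseteq> {ks. set ks \<subseteq> {1..m} \<and> length ks \<le> m}"
    unfolding compositions_def by fastforce
  show "finite {ks. set ks \<subseteq> {1..m} \<and> length ks \<le> m}"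
    by (rule finite_lists_length_le) simp
qed

lemma homog_poly_iff:
  "homog_poly q g m f \<longleftrightarrow> (\<exists>c. \<forall>w. f w = (\<Sum>ks\<in>compositions m. c ks * star_mono q g ks w))"
  unfolding homog_poly_def compositions_def ..

lemma homog_poly_cong: "homog_poly q g m f \<Longrightarrow> (\<And>w. f w = f' w) \<Longrightarrow> homog_poly q g m f'"
  by (metis ext)

lemma homog_poly_star_mono: "ks \<in> compositions m \<Longrightarrow> homog_poly q g m (star_mono q g ks)"
  unfolding homog_poly_iff
  by (rule exI[of _ "\<lambda>ks'. if ks' = ks then 1 else 0"])
     (simp add: finite_compositions if_distrib[of "\<lambda>x. x * _"] cong: if_cong)

lemma homog_poly_add:
  assumes "homog_poly q g m f" "homog_poly q g m f'"
  shows "homog_poly q g m (\<lambda>w. f w + f' w)"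
proof -
  obtain c c' where "\<forall>w. f w = (\<Sum>ks\<in>compositions m. c ks * star_mono q g ks w)"
    and "\<forall>w. f' w = (\<Sum>ks\<in>compositions m. c' ks * star_mono q g ks w)"
    using assms unfolding homog_poly_iff by blast
  then show ?thesis
    unfolding homog_poly_iff
    by (intro exI[of _ "\<lambda>ks. c ks + c' ks"]) (simp add: distrib_right sum.distrib)
qed

lemma homog_poly_scale:
  assumes "homog_poly q g m f"
  shows "homog_poly q g m (\<lambda>w. a * f w)"
proof -
  obtain c where "\<forall>w. f w = (\<Sum>ks\<in>compositions m. c ks * star_mono q g ks w)"
    using assms unfolding homog_poly_iff by blast
  then show ?thesis
    unfolding homog_poly_iff
    by (intro exI[of _ "\<lambda>ks. a * c ks"]) (simp add: sum_distrib_left mult.assoc)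
qed

lemma homog_poly_diff:
  assumes "homog_poly q g m f" "homog_poly q g m f'"
  shows "homog_poly q g m (\<lambda>w. f w - f' w)"
  using homog_poly_add[OF assms(1) homog_poly_scale[OF assms(2), of "- 1"]] by simp

lemma homog_poly_sum:
  "finite I \<Longrightarrow> (\<And>i. i \<in> I \<Longrightarrow> homog_poly q g m (F i)) \<Longrightarrow> homog_poly q g m (\<lambda>w. \<Sum>i\<in>I. F i w)"
proof (induction I rule: finite_induct)
  case empty
  then show ?case
    unfolding homog_poly_iff by (intro exI[of _ "\<lambda>_. 0"]) simp
next
  case (insert i I)
  then show ?case
    using homog_poly_add[of q g m "F i" "\<lambda>w. \<Sum>i\<in>I. F i w"] by simp
qed

lemma star_mono_append:
  assumes "q \<noteq> 0"
  shows "star q (star_mono q g ks) (star_mono q g ls) w = star_mono q g (ks @ ls) w"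
proof (induction ks arbitrary: w)
  case Nil
  then show ?case by (simp add: star_mono_def star_unit_left)
next
  case (Cons k ks)
  then have "star q (star_mono q g ks) (star_mono q g ls) = star_mono q g (ks @ ls)"
    by blast
  then show ?case
    using star_assoc[OF assms, of "g k" "star_mono q g ks" "star_mono q g ls" w]
    by (simp add: star_mono_def)
qed

lemma homog_poly_star:
  assumes "q \<noteq> 0" and "homog_poly q g a f" and "homog_poly q g b h"
  shows "homog_poly q g (a + b) (star q f h)"
proof -
  obtain c d where c: "f = (\<lambda>w. \<Sum>ks\<in>compositions a. c ks * star_mono q g ks w)"
    and d: "h = (\<lambda>w. \<Sum>ls\<in>compositions b. d ls * star_mono q g ls w)"
    using assms(2,3) unfolding homog_poly_iff by fast
  have "ks @ ls \<in> compositions (a + b)" if "ks \<in> compositions a" "ls \<in> compositions b" for ks ls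
    using that unfolding compositions_def by auto
  then have "homog_poly q g (a + b)
      (\<lambda>w. \<Sum>ks\<in>compositions a. \<Sum>ls\<in>compositions b. (c ks * d ls) * star_mono q g (ks @ ls) w)"
    by (intro homog_poly_sum homog_poly_scale homog_poly_star_mono finite_compositions)
  then show ?thesis
    by (rule homog_poly_cong)
       (simp add: c d star_sum_left star_sum_right star_scale_left star_scale_right
         star_mono_append[OF assms(1)] sum_distrib_left mult_ac)
qed

lemma homog_poly_generator: "1 \<le> k \<Longrightarrow> homog_poly q g k (g k)"
  using homog_poly_star_mono[of "[k]" k q g]
  by (simp add: compositions_def star_mono_def star_unit_right homog_poly_cong)

lemma homog_poly_unit: "homog_poly q g 0 (word [])"
  using homog_poly_star_mono[of "[]" 0 q g] by (simp add: compositions_def star_mono_def)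

lemma homog_poly_twisted_commutator:
  assumes "q \<noteq> 0" and "homog_poly q g a f" and "homog_poly q g b h" and "a + b = n"
  shows "homog_poly q g n (\<lambda>w. s * star q f h w - t * star q h f w)"
proof -
  have "homog_poly q g n (star q f h)" "homog_poly q g n (star q h f)"
    using homog_poly_star[OF assms(1-3)] homog_poly_star[OF assms(1,3,2)] assms(4)
    by (simp_all add: add.commute)
  then show ?thesis
    by (intro homog_poly_diff homog_poly_scale)
qed

lemma Cn_homog_poly_xwy_Cn:
  fixes q :: "'a::field_char_0"
  assumes qint_nonzero: "\<And>k. 0 < k \<Longrightarrow> qint q (int k) \<noteq> 0"
  shows "homog_poly q (\<lambda>k. xwy (Cn q (k - 1))) n (Cn q n)"
proof (induction n rule: less_induct)
  case (less n)
  let ?g = "\<lambda>k. xwy (Cn q (k - 1))"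
  let ?T = "\<lambda>k w. q^(2*k) * star q (?g k) (Cn q (n - k)) w
                - inverse (q^(2*k)) * star q (Cn q (n - k)) (?g k) w"
  show ?case
  proof (cases "n = 0")
    case True
    then show ?thesis using homog_poly_unit Cn_0[OF q_minus_inverse_nonzero[OF qint_nonzero]] by simp
  next
    case False
    have "homog_poly q ?g n (?T k)" if "k \<in> {1..n}" for k
      using that less.IH
      by (intro homog_poly_twisted_commutator[OF q_nonzero[OF qint_nonzero], where a = k and b = "n - k"]
          homog_poly_generator) auto
    then have "homog_poly q ?g n (\<lambda>w. inverse ((q - inverse q) * of_nat n) * (\<Sum>k\<in>{1..n}. ?T k w))"
      by (intro homog_poly_scale homog_poly_sum) auto
    moreover have "Cn q n w = inverse ((q - inverse q) * of_nat n) * (\<Sum>k\<in>{1..n}. ?T k w)" for w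
    proof -
      have "(q - inverse q) * of_nat n \<noteq> 0"
        using False q_minus_inverse_nonzero[OF qint_nonzero] by simp
      then have "Cn q n w
          = inverse ((q - inverse q) * of_nat n) * ((q - inverse q) * (of_nat n * Cn q n w))"
        by (simp add: field_simps)
      then show ?thesis
        by (simp only: Cn_recursion[OF qint_nonzero])
    qed
    ultimately show ?thesis
      by (simp add: homog_poly_cong)
  qed
qed

lemma xwy_Cn_homog_poly_Cn:
  fixes q :: "'a::field_char_0"
  assumes qint_nonzero: "\<And>k. 0 < k \<Longrightarrow> qint q (int k) \<noteq> 0"
  shows "1 \<le> n \<Longrightarrow> homog_poly q (Cn q) n (xwy (Cn q (n - 1)))"
proof (induction n rule: less_induct)
  case (less n)
  let ?T = "\<lambda>k w. q^(2*k) * star q (xwy (Cn q (k - 1))) (Cn q (n - k)) w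
                - inverse (q^(2*k)) * star q (Cn q (n - k)) (xwy (Cn q (k - 1))) w"
  define D where "D = q^(2*n) - inverse (q^(2*n))"
  have "D \<noteq> 0"
    using qint_nonzero[of "2 * n"] qint_nat[of q "2 * n"] less.prems by (auto simp: D_def)
  have "?T n w = D * xwy (Cn q (n - 1)) w" for w
    by (simp add: Cn_0[OF q_minus_inverse_nonzero[OF qint_nonzero]] star_unit_left star_unit_right D_def algebra_simps)
  moreover have "{1..n} = insert n {1..n - 1}"
    using less.prems by auto
  ultimately have "(q - inverse q) * of_nat n * Cn q n w
      = D * xwy (Cn q (n - 1)) w + (\<Sum>k\<in>{1..n - 1}. ?T k w)" for w
    using Cn_recursion[OF qint_nonzero, of n w] less.prems by (simp add: mult.assoc)
  then have "xwy (Cn q (n - 1)) w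
      = inverse D * ((q - inverse q) * of_nat n * Cn q n w - (\<Sum>k\<in>{1..n - 1}. ?T k w))" for w
    using \<open>D \<noteq> 0\<close> by simp
  moreover have "homog_poly q (Cn q) n (?T k)" if "k \<in> {1..n - 1}" for k
    using that less.IH
    by (intro homog_poly_twisted_commutator[OF q_nonzero[OF qint_nonzero], where a = k and b = "n - k"]
        homog_poly_generator) auto
  then have "homog_poly q (Cn q) n (\<lambda>w. \<Sum>k\<in>{1..n - 1}. ?T k w)"
    by (intro homog_poly_sum) auto
  then have "homog_poly q (Cn q) n
      (\<lambda>w. inverse D * ((q - inverse q) * of_nat n * Cn q n w - (\<Sum>k\<in>{1..n - 1}. ?T k w)))"
    using less.prems by (intro homog_poly_scale homog_poly_diff homog_poly_generator)
  ultimately show ?case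
    by (simp add: homog_poly_cong)
qed

lemma qint_nonzero_if_not_root_of_unity:
  fixes q :: "'a::field"
  assumes "q \<noteq> 0" and "\<forall>m. 0 < m \<longrightarrow> q ^ m \<noteq> 1" and "0 < k"
  shows "qint q (int k) \<noteq> 0"
proof -
  have "q ^ k - inverse (q ^ k) \<noteq> 0" if "0 < k" for k
  proof
    assume "q ^ k - inverse (q ^ k) = 0"
    then have "q ^ (2 * k) = 1"
      using assms(1) by (simp add: field_simps power_mult power2_eq_square)
    then show False
      using assms(2) that by simp
  qed
  from this[of 1] this[of k] show ?thesis
    using assms(3) by (simp add: qint_nat)
qed

theorem corollary8p2:
  fixes q :: "'a::field_char_0" and n :: nat
  assumes "q \<noteq> 0" and "\<forall>m::nat. m > 0 \<longrightarrow> q ^ m \<noteq> 1" and "n \<ge> 1"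
  shows "homog_poly q (\<lambda>k. xwy (Cn q (k - 1))) n (Cn q n)
       \<and> homog_poly q (\<lambda>k. Cn q k) n (xwy (Cn q (n - 1)))"
proof -
  have qint_nonzero: "\<And>k. 0 < k \<Longrightarrow> qint q (int k) \<noteq> 0"
    using qint_nonzero_if_not_root_of_unity assms(1,2) by blast
  show ?thesis
    using Cn_homog_poly_xwy_Cn[OF qint_nonzero] xwy_Cn_homog_poly_Cn[OF qint_nonzero assms(3)]
    by simp
qed

end
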